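(* Let $\Phi=\varphi\land\bigwedge RE\land\bigwedge DI$ be an $\mathcal{ALCQIO}_{b,Re}$-formula over $\tau$ with $RE=\{\mathit{Reach}(B_1,S_1,A_1),\dots,\mathit{Reach}(B_h,S_h,A_h)\}$. Let $1\le h'\le h$ and let $\mathcal{M}$ be a $\tau$-structure such that $\mathcal{M}\models\mathit{assoc}(\Phi)$, $\mathcal{M}$ is $\Phi$-semi-connected, and $\mathcal{M}$ has $\ell$-useful labelings $f_\ell$ for all $1\le\ell\le h$. If $\mathit{val}_{f_{h'}}(D^{\mathcal{M}}_{h'})>0$, then there is a tuple $\mathfrak{t}=(a_0,a_1,r)$ with $a_0,a_1\in M$ and $r\in\mathsf{N_F}$ such that: 1. $D^{\mathcal{M}}_\ell=D^{\mathcal{M}\rhd\mathfrak{t}}_\ell$ for all $\ell\ne h'$; 2. $\overline{tp}^{\varphi}_{\mathcal{M}}(u)=\overline{tp}^{\varphi}_{\mathcal{M}\rhd\mathfrak{t}}(u)$ for all $u\in M$; 3. $\mathcal{M}\rhd\mathfrak{t}\models\mathit{assoc}(\Phi)$; 4. $\mathit{val}_{f_{h'}}(D^{\mathcal{M}}_{h'})>\mathit{val}_{f_{h'}}(D^{\mathcal{M}\rhd\mathfrak{t}}_{h'})$; 5. $\mathit{val}_{f_\ell}(D^{\mathcal{M}}_\ell)=\mathit{val}_{f_\ell}(D^{\mathcal{M}\rhd\mathfrak{t}}_\ell)$ for all $\ell\ne h'$; 6. $\mathcal{M}\rhd\mathfrak{t}$ is $\Phi$-semi-connected; 7. $f_\ell$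 is an $\ell$-useful labeling for $\mathcal{M}\rhd\mathfrak{t}$ for all $1\le\ell\le h$.
   Context: Structures are finite; $\tau$ has atomic concepts, atomic roles (a subset $\mathsf{N_F}$ functional, interpreted as partial functions) and nominals. $\mathcal{ALCQIO}_b$: concepts built from atomic concepts and nominals ($o$ denotes $\{o^{\mathcal{M}}\}$) using $\sqcap,\sqcup,\neg,\exists r.C,\exists^{\le n}r.C$ for roles $r$ atomic or inverse $r^-$; formulae are Boolean combinations of inclusions $C\sqsubseteq D$ and equalities $C\equiv D$; standard semantics. A reachability assertion $\mathit{Reach}(B,S,A)$ has atomic concepts $A,B$ and $S\subseteq\mathsf{N_F}$; $\mathit{Disj}(A_1,A_2)$ is $A_1\sqcap A_2\equiv\bot$. $RE,DI$ are compatible if for every two assertions $\mathit{Reach}(B_1,S_1,A_1),\mathit{Reach}(B_2,S_2,A_2)\in RE$ with $S_1\cap S_2\neq\emptyset$, $\mathit{Disj}(A_1,A_2)\in DI$. An $\mathcal{ALCQIO}_{b,Re}$-formula is $\Phi=\varphi\land\bigwedge RE\land\bigwedge DI$ with $\varphi\in\mathcal{ALCQIO}_b$, $RE,DI$ finite and compatible. $\mathit{assoc}(\Phi)=\varphi\land\bigwedge_{\mathit{Reach}(B,S,A)\in RE}(B\sqsubseteq A)\land\bigwedge DI$. $D^{\mathcal{M}}_{\ell}$ is the directed graph on vertex set $A_{\ell}^{\mathcal{M}}$ with edges $\bigcup_{s\in S_{\ell}}s^{\mathcal{M}}\cap(A_{\ell}^{\mathcal{M}}\times A_{\ell}^{\mathcal{M}})$.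 $\mathcal{M}$ is $\Phi$-semi-connected if $\mathcal{M}\models\mathit{assoc}(\Phi)$ and for every $\ell$ and $u\in A_{\ell}^{\mathcal{M}}$, $u$ is reachable in $D^{\mathcal{M}}_{\ell}$ from $B_{\ell}^{\mathcal{M}}$ or from a directed cycle of $D^{\mathcal{M}}_{\ell}$. Types: $\mathrm{Con}(\varphi)$ is the set of concepts occurring in $\varphi$ (including subconcepts), $\mathrm{TYPES}_\varphi$ its power set, $\overline{tp}^{\varphi}_{\mathcal{M}}(u)=\{C\in\mathrm{Con}(\varphi)\mid u\in C^{\mathcal{M}}\}$. An $\ell$-useful labeling for $\mathcal{M}$ is $f_\ell:A_{\ell}^{\mathcal{M}}\to[1,|\mathrm{TYPES}_\varphi|]$ such that (1) $f_\ell(u)=f_\ell(v)$ implies equal types, and (2) for every $u\in A_{\ell}^{\mathcal{M}}$, either $u\in B_{\ell}^{\mathcal{M}}$ or there are $v,w\in A_{\ell}^{\mathcal{M}}$ with $f_\ell(u)=f_\ell(v)$, $f_\ell(w)<f_\ell(v)$ and $(w,v)$ an edge of $D^{\mathcal{M}}_{\ell}$. A base for $D^{\mathcal{M}}_{\ell}$ is a set $X\subseteq A_{\ell}^{\mathcal{M}}$ from which all of $A_{\ell}^{\mathcal{M}}$ is reachable in $D^{\mathcal{M}}_{\ell}$; $\mathit{val}_f(X)=\sum_{x\in X\setminus B_{\ell}^{\mathcal{M}}}f(x)$ and $\mathit{val}_f(D^{\mathcal{M}}_{\ell})$ is the minimum of $\mathit{val}_f(X)$ over all bases $X$. The operation $\rhd$: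 for $\mathfrak{t}=(a_0,a_1,r)$, $\mathcal{M}\rhd\mathfrak{t}$ has the same universe and interpretations as $\mathcal{M}$ except $r^{\mathcal{M}\rhd\mathfrak{t}}=\big(r^{\mathcal{M}}\setminus\{(a_i,b)\mid (a_i,b)\in r^{\mathcal{M}},i\in\{0,1\}\}\big)\cup\{(a_{1-i},b)\mid (a_i,b)\in r^{\mathcal{M}},i\in\{0,1\}\}$. *)

theory Defs
  imports Main
begin

text \<open>Signature tau: atomic concepts are the elements of type 'c, atomic roles the
elements of type 'r (a subset NF of which is functional; NF is a parameter),
nominals the elements of type 'o.\<close>

datatype 'r role = RName 'r | RInv 'r

datatype ('c, 'r, 'o) concept =
    CAtom 'c
  | CNom 'o
  | CAnd "('c, 'r, 'o) concept" "('c, 'r, 'o) concept"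
  | COr "('c, 'r, 'o) concept" "('c, 'r, 'o) concept"
  | CNot "('c, 'r, 'o) concept"
  | CEx "'r role" "('c, 'r, 'o) concept"
  | CAtMost nat "'r role" "('c, 'r, 'o) concept"

datatype ('c, 'r, 'o) formula =
    FIncl "('c, 'r, 'o) concept" "('c, 'r, 'o) concept"
  | FEq "('c, 'r, 'o) concept" "('c, 'r, 'o) concept"
  | FNeg "('c, 'r, 'o) formula"
  | FConj "('c, 'r, 'o) formula" "('c, 'r, 'o) formula"
  | FDisj "('c, 'r, 'o) formula" "('c, 'r, 'o) formula"

record ('a, 'c, 'r, 'o) struc =
  univ :: "'a set"
  cint :: "'c \<Rightarrow> 'a set"
  rint :: "'r \<Rightarrow> ('a \<times> 'a) set"
  oint :: "'o \<Rightarrow> 'a"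

definition wf_struc :: "'r set \<Rightarrow> ('a, 'c, 'r, 'o) struc \<Rightarrow> bool" where
  "wf_struc NF M \<longleftrightarrow>
     finite (univ M) \<and>
     (\<forall>c. cint M c \<subseteq> univ M) \<and>
     (\<forall>r. rint M r \<subseteq> univ M \<times> univ M) \<and>
     (\<forall>n. oint M n \<in> univ M) \<and>
     (\<forall>r\<in>NF. \<forall>x y z. (x, y) \<in> rint M r \<longrightarrow> (x, z) \<in> rint M r \<longrightarrow> y = z)"

fun role_int :: "('a, 'c, 'r, 'o) struc \<Rightarrow> 'r role \<Rightarrow> ('a \<times> 'a) set" where
  "role_int M (RName r) = rint M r"
| "role_int M (RInv r) = (rint M r)\<inverse>"

fun ceval :: "('a, 'c, 'r, 'o) struc \<Rightarrow> ('c, 'r, 'o) concept \<Rightarrow> 'a set" where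
  "ceval M (CAtom A) = cint M A"
| "ceval M (CNom n) = {oint M n}"
| "ceval M (CAnd C D) = ceval M C \<inter> ceval M D"
| "ceval M (COr C D) = ceval M C \<union> ceval M D"
| "ceval M (CNot C) = univ M - ceval M C"
| "ceval M (CEx R C) = {x \<in> univ M. \<exists>y. (x, y) \<in> role_int M R \<and> y \<in> ceval M C}"
| "ceval M (CAtMost n R C) =
     {x \<in> univ M. card {y. (x, y) \<in> role_int M R \<and> y \<in> ceval M C} \<le> n}"

fun fsat :: "('a, 'c, 'r, 'o) struc \<Rightarrow> ('c, 'r, 'o) formula \<Rightarrow> bool" where
  "fsat M (FIncl C D) = (ceval M C \<subseteq> ceval M D)"
| "fsat M (FEq C D) = (ceval M C = ceval M D)"
| "fsat M (FNeg F) = (\<not> fsat M F)"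
| "fsat M (FConj F G) = (fsat M F \<and> fsat M G)"
| "fsat M (FDisj F G) = (fsat M F \<or> fsat M G)"

fun subconcepts :: "('c, 'r, 'o) concept \<Rightarrow> ('c, 'r, 'o) concept set" where
  "subconcepts (CAtom A) = {CAtom A}"
| "subconcepts (CNom n) = {CNom n}"
| "subconcepts (CAnd C D) = insert (CAnd C D) (subconcepts C \<union> subconcepts D)"
| "subconcepts (COr C D) = insert (COr C D) (subconcepts C \<union> subconcepts D)"
| "subconcepts (CNot C) = insert (CNot C) (subconcepts C)"
| "subconcepts (CEx R C) = insert (CEx R C) (subconcepts C)"
| "subconcepts (CAtMost n R C) = insert (CAtMost n R C) (subconcepts C)"

fun Con :: "('c, 'r, 'o) formula \<Rightarrow> ('c, 'r, 'o) concept set" where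
  "Con (FIncl C D) = subconcepts C \<union> subconcepts D"
| "Con (FEq C D) = subconcepts C \<union> subconcepts D"
| "Con (FNeg F) = Con F"
| "Con (FConj F G) = Con F \<union> Con G"
| "Con (FDisj F G) = Con F \<union> Con G"

definition TYPES :: "('c, 'r, 'o) formula \<Rightarrow> ('c, 'r, 'o) concept set set" where
  "TYPES \<phi> = Pow (Con \<phi>)"

definition tp :: "('c, 'r, 'o) formula \<Rightarrow> ('a, 'c, 'r, 'o) struc \<Rightarrow> 'a \<Rightarrow> ('c, 'r, 'o) concept set" where
  "tp \<phi> M u = {C \<in> Con \<phi>. u \<in> ceval M C}"

text \<open>A reachability assertion Reach(B,S,A) is represented as the triple (B, S, A).
The set RE = {Reach(B_1,S_1,A_1),...,Reach(B_h,S_h,A_h)} is represented by the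
distinct list RE of length h, the l-th assertion (1 <= l <= h) being RE ! (l - 1).
A disjointness assertion Disj(A1,A2) is represented by the pair (A1, A2).\<close>

type_synonym ('c, 'r) reach = "'c \<times> 'r set \<times> 'c"

definition reachB :: "('c, 'r) reach list \<Rightarrow> nat \<Rightarrow> 'c" where
  "reachB RE l = fst (RE ! (l - 1))"
definition reachS :: "('c, 'r) reach list \<Rightarrow> nat \<Rightarrow> 'r set" where
  "reachS RE l = fst (snd (RE ! (l - 1)))"
definition reachA :: "('c, 'r) reach list \<Rightarrow> nat \<Rightarrow> 'c" where
  "reachA RE l = snd (snd (RE ! (l - 1)))"

definition compatible :: "('c, 'r) reach list \<Rightarrow> ('c \<times> 'c) set \<Rightarrow> bool" where
  "compatible RE DI \<longleftrightarrow>
     (\<forall>i\<in>{1..length RE}. \<forall>j\<in>{1..length RE}. i \<noteq> j \<longrightarrow>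
        reachS RE i \<inter> reachS RE j \<noteq> {} \<longrightarrow>
        (reachA RE i, reachA RE j) \<in> DI \<or> (reachA RE j, reachA RE i) \<in> DI)"

definition is_ALCQIO_bRe :: "'r set \<Rightarrow> ('c, 'r) reach list \<Rightarrow> ('c \<times> 'c) set \<Rightarrow> bool" where
  "is_ALCQIO_bRe NF RE DI \<longleftrightarrow>
     distinct RE \<and> finite DI \<and> (\<forall>l\<in>{1..length RE}. reachS RE l \<subseteq> NF) \<and>
     compatible RE DI"

definition sat_assoc :: "('a, 'c, 'r, 'o) struc \<Rightarrow> ('c, 'r, 'o) formula \<Rightarrow> ('c, 'r) reach list \<Rightarrow> ('c \<times> 'c) set \<Rightarrow> bool" where
  "sat_assoc M \<phi> RE DI \<longleftrightarrow>
     fsat M \<phi> \<and>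
     (\<forall>l\<in>{1..length RE}. cint M (reachB RE l) \<subseteq> cint M (reachA RE l)) \<and>
     (\<forall>(A1, A2)\<in>DI. cint M A1 \<inter> cint M A2 = {})"

text \<open>D^M_l as a pair (vertex set, edge set).\<close>
definition Dgraph :: "('a, 'c, 'r, 'o) struc \<Rightarrow> ('c, 'r) reach list \<Rightarrow> nat \<Rightarrow> 'a set \<times> ('a \<times> 'a) set" where
  "Dgraph M RE l =
     (cint M (reachA RE l),
      (\<Union>s\<in>reachS RE l. rint M s) \<inter> (cint M (reachA RE l) \<times> cint M (reachA RE l)))"

definition semi_connected :: "('a, 'c, 'r, 'o) struc \<Rightarrow> ('c, 'r, 'o) formula \<Rightarrow> ('c, 'r) reach list \<Rightarrow> ('c \<times> 'c) set \<Rightarrow> bool" where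
  "semi_connected M \<phi> RE DI \<longleftrightarrow>
     sat_assoc M \<phi> RE DI \<and>
     (\<forall>l\<in>{1..length RE}. \<forall>u\<in>fst (Dgraph M RE l).
        (\<exists>b\<in>cint M (reachB RE l). (b, u) \<in> (snd (Dgraph M RE l))\<^sup>*) \<or>
        (\<exists>c. (c, c) \<in> (snd (Dgraph M RE l))\<^sup>+ \<and> (c, u) \<in> (snd (Dgraph M RE l))\<^sup>*))"

definition useful_labeling :: "('c, 'r, 'o) formula \<Rightarrow> ('c, 'r) reach list \<Rightarrow> nat \<Rightarrow> ('a, 'c, 'r, 'o) struc \<Rightarrow> ('a \<Rightarrow> nat) \<Rightarrow> bool" where
  "useful_labeling \<phi> RE l M f \<longleftrightarrow>
     (\<forall>u\<in>cint M (reachA RE l). 1 \<le> f u \<and> f u \<le> card (TYPES \<phi>)) \<and>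
     (\<forall>u\<in>cint M (reachA RE l). \<forall>v\<in>cint M (reachA RE l). f u = f v \<longrightarrow> tp \<phi> M u = tp \<phi> M v) \<and>
     (\<forall>u\<in>cint M (reachA RE l). u \<in> cint M (reachB RE l) \<or>
        (\<exists>v\<in>cint M (reachA RE l). \<exists>w\<in>cint M (reachA RE l).
           f u = f v \<and> f w < f v \<and> (w, v) \<in> snd (Dgraph M RE l)))"

definition is_base :: "'a set \<times> ('a \<times> 'a) set \<Rightarrow> 'a set \<Rightarrow> bool" where
  "is_base D X \<longleftrightarrow> X \<subseteq> fst D \<and> (\<forall>v\<in>fst D. \<exists>x\<in>X. (x, v) \<in> (snd D)\<^sup>*)"

definition val_set :: "('a \<Rightarrow> nat) \<Rightarrow> 'a set \<Rightarrow> 'a set \<Rightarrow> nat" where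
  "val_set f B X = (\<Sum>x\<in>X - B. f x)"

definition val_graph :: "('a \<Rightarrow> nat) \<Rightarrow> 'a set \<Rightarrow> 'a set \<times> ('a \<times> 'a) set \<Rightarrow> nat" where
  "val_graph f B D = Min {val_set f B X | X. is_base D X}"

definition val :: "('a \<Rightarrow> nat) \<Rightarrow> ('a, 'c, 'r, 'o) struc \<Rightarrow> ('c, 'r) reach list \<Rightarrow> nat \<Rightarrow> nat" where
  "val f M RE l = val_graph f (cint M (reachB RE l)) (Dgraph M RE l)"

definition swap_op :: "('a, 'c, 'r, 'o) struc \<Rightarrow> 'a \<times> 'a \<times> 'r \<Rightarrow> ('a, 'c, 'r, 'o) struc" where
  "swap_op M t = (case t of (a0, a1, r) \<Rightarrow>
     M\<lparr> rint := (rint M)(r :=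
        (rint M r - {(a, b). (a, b) \<in> rint M r \<and> (a = a0 \<or> a = a1)})
        \<union> {(a1, b) | b. (a0, b) \<in> rint M r} \<union> {(a0, b) | b. (a1, b) \<in> rint M r}) \<rparr>)"

end

theory Submission
  imports Defs "HOL-Combinatorics.Transposition"
begin

text \<open>Let \<open>X\<close> be a base of \<open>D_h'\<close> of minimal value and \<open>y \<in> X\<close> a vertex outside \<open>B_h'\<close>,
which exists as the value is positive. By minimality no vertex of smaller label and no other
vertex of \<open>X \<union> B_h'\<close> reaches \<open>y\<close>, so by semi-connectedness \<open>y\<close> lies on a cycle
\<open>y \<rightarrow> z \<rightarrow>* y\<close>, say with \<open>(y, z)\<close> an \<open>r\<close>-edge. Usefulness gives a vertex \<open>t\<close> with the label of \<open>y\<close>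
(hence with the type of \<open>y\<close>) and an edge \<open>w \<rightarrow> t\<close> with \<open>f w < f t\<close>; in particular \<open>t\<close> does not reach
\<open>y\<close>. Exchanging the outgoing \<open>r\<close>-edges of \<open>y\<close> and \<open>t\<close> preserves all concept extensions, and by
compatibility it changes no graph \<open>D_l\<close> with \<open>l \<noteq> h'\<close>. In the new \<open>D_h'\<close> there is a path
\<open>w \<rightarrow> t \<rightarrow> z \<rightarrow>* y\<close>, so \<open>w\<close> can replace \<open>y\<close> in \<open>X\<close>, which lowers the value. Every old edge survives
with its source possibly moved between \<open>y\<close> and \<open>t\<close>, which preserves semi-connectedness and
usefulness.\<close>

section \<open>Swapping the outgoing edges of two elements preserves types\<close>

lemma swap_op_simps [simp]:
  "univ (swap_op M (a0, a1, r)) = univ M"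
  "cint (swap_op M (a0, a1, r)) = cint M"
  "oint (swap_op M (a0, a1, r)) = oint M"
  by (simp_all add: swap_op_def)

lemma rint_swap_op_iff:
  "(a, b) \<in> rint (swap_op M (a0, a1, r)) s \<longleftrightarrow>
     (if s = r then (transpose a0 a1 a, b) \<in> rint M r else (a, b) \<in> rint M s)"
  by (auto simp: swap_op_def transpose_def)

lemma transpose_mem_iff [simp]:
  "(a0 \<in> S \<longleftrightarrow> a1 \<in> S) \<Longrightarrow> transpose a0 a1 x \<in> S \<longleftrightarrow> x \<in> S"
  by (auto simp: transpose_def)

definition successors :: "('a, 'c, 'r, 'o) struc \<Rightarrow> 'r role \<Rightarrow> 'a set \<Rightarrow> 'a \<Rightarrow> 'a set" where
  "successors M R C x = {y. (x, y) \<in> role_int M R \<and> y \<in> C}"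

lemma ceval_role_restrictions:
  "ceval M (CEx R C) = {x \<in> univ M. successors M R (ceval M C) x \<noteq> {}}"
  "ceval M (CAtMost n R C) = {x \<in> univ M. card (successors M R (ceval M C) x) \<le> n}"
  by (auto simp: successors_def)

lemma successors_swap_op:
  assumes "a0 \<in> C \<longleftrightarrow> a1 \<in> C"
  shows "successors (swap_op M (a0, a1, r)) R C x =
    (if R = RName r then successors M R C (transpose a0 a1 x)
     else if R = RInv r then transpose a0 a1 ` successors M R C x
     else successors M R C x)"
  by (cases R) (simp_all add: successors_def rint_swap_op_iff in_transpose_image_iff set_eq_iff assms)

lemma swap_op_preserves_successor_condition:
  assumes univ: "a0 \<in> univ M" "a1 \<in> univ M" and C: "a0 \<in> C \<longleftrightarrow> a1 \<in> C"
    and P: "\<And>N. P (transpose a0 a1 ` N) \<longleftrightarrow> P N"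
    and S: "S = {x \<in> univ M. P (successors M R C x)}" "a0 \<in> S \<longleftrightarrow> a1 \<in> S"
  shows "{x \<in> univ M. P (successors (swap_op M (a0, a1, r)) R C x)} = S"
proof -
  have "P (successors (swap_op M (a0, a1, r)) R C x) \<longleftrightarrow> x \<in> S" if "x \<in> univ M" for x
  proof -
    have "transpose a0 a1 x \<in> S \<longleftrightarrow> x \<in> S"
      using S(2) by simp
    moreover have "transpose a0 a1 x \<in> univ M"
      using univ that by simp
    ultimately show ?thesis
      using that by (auto simp: successors_swap_op[OF C] P S(1))
  qed
  then show ?thesis
    using S(1) by auto
qed

lemma subconcepts_self: "C \<in> subconcepts C"
  by (cases C) auto

lemma subconcepts_trans: "D \<in> subconcepts C \<Longrightarrow> subconcepts D \<subseteq> subconcepts C"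
  by (induction C) auto

lemma subconcepts_subset_Con: "C \<in> Con \<phi> \<Longrightarrow> subconcepts C \<subseteq> Con \<phi>"
  by (induction \<phi>) (auto dest: subconcepts_trans)

lemma ceval_swap_op:
  assumes univ: "a0 \<in> univ M" "a1 \<in> univ M"
    and agree: "\<forall>D\<in>K. a0 \<in> ceval M D \<longleftrightarrow> a1 \<in> ceval M D"
  shows "subconcepts C \<subseteq> K \<Longrightarrow> ceval (swap_op M (a0, a1, r)) C = ceval M C"
proof (induction C)
  case (CEx R C)
  then have "ceval (swap_op M (a0, a1, r)) C = ceval M C"
    and "a0 \<in> ceval M C \<longleftrightarrow> a1 \<in> ceval M C"
    and "a0 \<in> ceval M (CEx R C) \<longleftrightarrow> a1 \<in> ceval M (CEx R C)"
    using agree subconcepts_self[of C] by auto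
  then show ?case
    using univ by (simp only: ceval_role_restrictions swap_op_simps)
      (rule swap_op_preserves_successor_condition, auto)
next
  case (CAtMost n R C)
  then have "ceval (swap_op M (a0, a1, r)) C = ceval M C"
    and "a0 \<in> ceval M C \<longleftrightarrow> a1 \<in> ceval M C"
    and "a0 \<in> ceval M (CAtMost n R C) \<longleftrightarrow> a1 \<in> ceval M (CAtMost n R C)"
    using agree subconcepts_self[of C] by auto
  then show ?case
    using univ by (simp only: ceval_role_restrictions swap_op_simps)
      (rule swap_op_preserves_successor_condition, auto simp: card_image)
qed auto

lemma fsat_swap_op:
  assumes "a0 \<in> univ M" "a1 \<in> univ M"
  shows "\<forall>D\<in>Con F. a0 \<in> ceval M D \<longleftrightarrow> a1 \<in> ceval M D \<Longrightarrow>
    fsat (swap_op M (a0, a1, r)) F \<longleftrightarrow> fsat M F"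
  by (induction F) (auto simp: ceval_swap_op[OF assms])

lemma agree_on_Con_iff_tp_eq:
  "(\<forall>D\<in>Con \<phi>. a0 \<in> ceval M D \<longleftrightarrow> a1 \<in> ceval M D) \<longleftrightarrow> tp \<phi> M a0 = tp \<phi> M a1"
  by (auto simp: tp_def)

lemma tp_swap_op:
  assumes "a0 \<in> univ M" "a1 \<in> univ M" "tp \<phi> M a0 = tp \<phi> M a1"
  shows "tp \<phi> (swap_op M (a0, a1, r)) = tp \<phi> M"
proof -
  have "ceval (swap_op M (a0, a1, r)) C = ceval M C" if "C \<in> Con \<phi>" for C
    using ceval_swap_op[OF assms(1,2)] assms(3) subconcepts_subset_Con[OF that]
    unfolding agree_on_Con_iff_tp_eq[symmetric] by blast
  then show ?thesis
    by (auto simp: tp_def fun_eq_iff)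
qed

lemma sat_assoc_swap_op:
  assumes "a0 \<in> univ M" "a1 \<in> univ M" "tp \<phi> M a0 = tp \<phi> M a1"
  shows "sat_assoc (swap_op M (a0, a1, r)) \<phi> RE DI \<longleftrightarrow> sat_assoc M \<phi> RE DI"
  using assms fsat_swap_op[of a0 M a1 \<phi> r]
  by (simp add: sat_assoc_def agree_on_Con_iff_tp_eq)

section \<open>Reachability from a base or a cycle\<close>

definition reachable_from_base_or_cycle :: "('a \<times> 'a) set \<Rightarrow> 'a set \<Rightarrow> 'a \<Rightarrow> bool" where
  "reachable_from_base_or_cycle E B u \<longleftrightarrow>
     (\<exists>b\<in>B. (b, u) \<in> E\<^sup>*) \<or> (\<exists>c. (c, c) \<in> E\<^sup>+ \<and> (c, u) \<in> E\<^sup>*)"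

text \<open>This is how \<open>swap_op M (a0, a1, r)\<close> acts on a graph \<open>D_l\<close> whose vertex set contains
both or neither of \<open>a0\<close> and \<open>a1\<close>.\<close>
definition edges_kept_up_to_swap :: "'a \<Rightarrow> 'a \<Rightarrow> ('a \<times> 'a) set \<Rightarrow> ('a \<times> 'a) set \<Rightarrow> bool" where
  "edges_kept_up_to_swap a0 a1 E E' \<longleftrightarrow>
     (\<forall>(a, b)\<in>E. (a, b) \<in> E' \<or> (transpose a0 a1 a, b) \<in> E')"

lemma edges_kept_up_to_swapI:
  "(\<And>a b. (a, b) \<in> E \<Longrightarrow> (a, b) \<in> E' \<or> (transpose a0 a1 a, b) \<in> E') \<Longrightarrow>
    edges_kept_up_to_swap a0 a1 E E'"
  by (auto simp: edges_kept_up_to_swap_def)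

lemma edges_kept_up_to_swap_refl: "edges_kept_up_to_swap a0 a1 E E"
  by (auto simp: edges_kept_up_to_swap_def)

lemma edge_kept_up_to_swap:
  "edges_kept_up_to_swap a0 a1 E E' \<Longrightarrow> (a, b) \<in> E \<Longrightarrow> a \<noteq> a0 \<Longrightarrow> a \<noteq> a1 \<Longrightarrow> (a, b) \<in> E'"
  by (auto simp: edges_kept_up_to_swap_def)

lemma reachable_from_base_or_cycle_if_predecessors:
  assumes "finite A" "E \<subseteq> A \<times> A" and pred: "\<forall>v\<in>A - B. \<exists>p. (p, v) \<in> E" and "u \<in> A"
  shows "reachable_from_base_or_cycle E B u"
proof (rule ccontr)
  assume no_root: "\<not> reachable_from_base_or_cycle E B u"
  define S where "S = {a. (a, u) \<in> E\<^sup>*}"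
  define R where "R = E \<inter> S \<times> S"
  have "S \<subseteq> A"
    using \<open>u \<in> A\<close> \<open>E \<subseteq> A \<times> A\<close> by (auto simp: S_def elim: converse_rtranclE)
  then have "finite R"
    using \<open>finite A\<close> by (auto simp: R_def intro: finite_subset[of _ "A \<times> A"])
  \<comment> \<open>Every vertex reaching \<open>u\<close> has a predecessor among them, so on this finite set the edge
    relation is not well-founded, i.e.\ it has a cycle.\<close>
  have "\<not> wf R"
  proof
    assume "wf R"
    moreover have "u \<in> S"
      by (simp add: S_def)
    ultimately obtain a where "a \<in> S" and a_min: "\<And>p. (p, a) \<in> R \<Longrightarrow> p \<notin> S"
      using wfE_min by metis
    then have "a \<in> A - B"
      using no_root \<open>S \<subseteq> A\<close> by (auto simp: S_def reachable_from_base_or_cycle_def)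
    then obtain p where "(p, a) \<in> E"
      using pred by blast
    with \<open>a \<in> S\<close> have "(p, a) \<in> R" "p \<in> S"
      by (auto simp: R_def S_def intro: converse_rtrancl_into_rtrancl)
    with a_min show False
      by blast
  qed
  then obtain c where "(c, c) \<in> R\<^sup>+"
    using \<open>finite R\<close> finite_acyclic_wf by (auto simp: acyclic_def)
  moreover have "R\<^sup>+ \<subseteq> E\<^sup>+"
    unfolding R_def by (meson Int_lower1 subsetI trancl_mono)
  moreover have "R\<^sup>+ \<subseteq> S \<times> S"
    unfolding R_def by (simp add: trancl_subset_Sigma)
  ultimately show False
    using no_root by (auto simp: reachable_from_base_or_cycle_def S_def)
qed

lemma predecessor_if_reachable_from_base_or_cycle:
  assumes "reachable_from_base_or_cycle E B u" "u \<notin> B"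
  obtains p where "(p, u) \<in> E"
proof -
  have "\<exists>a. (a, u) \<in> E\<^sup>+"
    using assms by (auto simp: reachable_from_base_or_cycle_def dest: rtranclD)
  then show thesis
    using that by (auto dest: tranclD2)
qed

lemma reachable_from_base_or_cycle_kept_up_to_swap:
  assumes "finite A" "E' \<subseteq> A \<times> A" "edges_kept_up_to_swap a0 a1 E E'"
    and "\<forall>u\<in>A. reachable_from_base_or_cycle E B u" "u \<in> A"
  shows "reachable_from_base_or_cycle E' B u"
proof (rule reachable_from_base_or_cycle_if_predecessors[OF assms(1,2) _ \<open>u \<in> A\<close>])
  show "\<forall>v\<in>A - B. \<exists>p. (p, v) \<in> E'"
    using assms(3,4) predecessor_if_reachable_from_base_or_cycle
    by (fastforce simp: edges_kept_up_to_swap_def)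
qed

section \<open>Bases of minimal value\<close>

lemma finite_base_values:
  assumes "finite (fst D)"
  shows "finite {val_set f B X | X. is_base D X}"
proof (rule finite_subset)
  show "{val_set f B X | X. is_base D X} \<subseteq> val_set f B ` Pow (fst D)"
    by (auto simp: is_base_def)
qed (use assms in simp)

lemma val_graph_le:
  "finite (fst D) \<Longrightarrow> is_base D X \<Longrightarrow> val_graph f B D \<le> val_set f B X"
  unfolding val_graph_def by (rule Min_le) (auto intro: finite_base_values)

lemma exists_optimal_base:
  assumes "finite (fst D)"
  obtains X where "is_base D X" "val_set f B X = val_graph f B D"
proof -
  have "is_base D (fst D)"
    by (auto simp: is_base_def)
  then have "val_graph f B D \<in> {val_set f B X | X. is_base D X}"
    unfolding val_graph_def using finite_base_values[OF assms] by (intro Min_in) auto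
  then show thesis
    using that by auto
qed

lemma is_base_if_reaches_base:
  assumes "is_base (A, E) X" "Y \<subseteq> A" "\<forall>x\<in>X. \<exists>z\<in>Y. (z, x) \<in> E\<^sup>*"
  shows "is_base (A, E) Y"
  unfolding is_base_def
proof (intro conjI ballI)
  fix v
  assume "v \<in> fst (A, E)"
  then obtain x where "x \<in> X" "(x, v) \<in> E\<^sup>*"
    using assms(1) by (auto simp: is_base_def)
  moreover obtain z where "z \<in> Y" "(z, x) \<in> E\<^sup>*"
    using assms(3) \<open>x \<in> X\<close> by blast
  ultimately show "\<exists>z\<in>Y. (z, v) \<in> (snd (A, E))\<^sup>*"
    by (auto intro: rtrancl_trans)
qed (use assms(2) in simp)

lemma val_set_remove:
  "finite X \<Longrightarrow> y \<in> X \<Longrightarrow> y \<notin> B \<Longrightarrow> val_set f B X = f y + val_set f B (X - {y})"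
proof -
  assume "finite X" "y \<in> X" "y \<notin> B"
  then have "X - B = insert y (X - {y} - B)"
    by blast
  then show ?thesis
    using \<open>finite X\<close> by (simp add: val_set_def)
qed

lemma val_set_insert_le: "finite X \<Longrightarrow> val_set f B (insert w X) \<le> val_set f B X + f w"
  unfolding val_set_def by (cases "w \<in> X - B") (auto simp: insert_Diff_if insert_absorb)

lemma val_set_Un_base: "val_set f B (X \<union> B) = val_set f B X"
  by (simp add: val_set_def Un_Diff)

lemma rtrancl_kept_up_to_swap:
  assumes "edges_kept_up_to_swap y t E E'" "(t, y) \<notin> E\<^sup>*"
  shows "(p, y) \<in> E\<^sup>* \<Longrightarrow> (p, y) \<in> E'\<^sup>*"
proof (induction rule: converse_rtrancl_induct)
  case (step p q)
  show ?case
  proof (cases "p = y")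
    case False
    moreover have "p \<noteq> t"
      using assms(2) step.hyps by (auto intro: converse_rtrancl_into_rtrancl)
    ultimately have "(p, q) \<in> E'"
      using edge_kept_up_to_swap[OF assms(1) step.hyps(1)] by blast
    then show ?thesis
      using step.IH by (rule converse_rtrancl_into_rtrancl)
  qed simp
qed simp

lemma is_base_exchange:
  assumes base: "is_base (A, E) X" "y \<in> X" and kept: "edges_kept_up_to_swap y t E E'"
    and w: "w \<in> A" "(w, t) \<in> E" "w \<noteq> y" "w \<noteq> t"
    and z: "(t, z) \<in> E'" "(z, y) \<in> E\<^sup>*" and "(t, y) \<notin> E\<^sup>*"
  shows "is_base (A, E') (insert w (X - {y}))"
proof -
  define P where "P = {v. \<exists>x\<in>insert w (X - {y}). (x, v) \<in> E'\<^sup>*}"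
  have "(w, t) \<in> E'"
    using edge_kept_up_to_swap[OF kept] w by blast
  then have "t \<in> P"
    unfolding P_def by blast
  moreover have "(t, y) \<in> E'\<^sup>*"
    using z rtrancl_kept_up_to_swap[OF kept \<open>(t, y) \<notin> E\<^sup>*\<close>]
    by (blast intro: converse_rtrancl_into_rtrancl)
  ultimately have "y \<in> P"
    unfolding P_def by (blast intro: rtrancl_trans)
  have P_closed: "b \<in> P" if "a \<in> P" "(a, b) \<in> E" for a b
  proof -
    have "transpose y t a \<in> P"
      using that(1) \<open>y \<in> P\<close> \<open>t \<in> P\<close> by (auto simp: transpose_def)
    then show ?thesis
      using that kept unfolding edges_kept_up_to_swap_def P_def
      by (blast intro: rtrancl_into_rtrancl)
  qed
  have "A \<subseteq> P"
  proof
    fix v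
    assume "v \<in> A"
    then obtain x where "x \<in> X" "(x, v) \<in> E\<^sup>*"
      using base by (auto simp: is_base_def)
    have "x \<in> P"
      using \<open>x \<in> X\<close> \<open>y \<in> P\<close> by (cases "x = y") (auto simp: P_def)
    with \<open>(x, v) \<in> E\<^sup>*\<close> show "v \<in> P"
      by (induction rule: rtrancl_induct) (auto intro: P_closed)
  qed
  then show ?thesis
    using base w by (auto simp: is_base_def P_def)
qed

context
  fixes A :: "'a set" and E :: "('a \<times> 'a) set" and B X :: "'a set" and f :: "'a \<Rightarrow> nat" and y :: 'a
  assumes finite: "finite A" and base: "is_base (A, E) X"
    and optimal: "val_set f B X = val_graph f B (A, E)" and y: "y \<in> X" "y \<notin> B"
begin

lemma optimal_base_finite_remove: "finite (X - {y})"
  using base finite by (auto simp: is_base_def intro: finite_subset)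

lemma optimal_base_le: "is_base (A, E) Y \<Longrightarrow> val_set f B X \<le> val_set f B Y"
  using val_graph_le[of "(A, E)"] finite optimal by simp

lemma optimal_base_remove: "val_set f B X = f y + val_set f B (X - {y})"
  using base finite y by (intro val_set_remove) (auto simp: is_base_def intro: finite_subset)

lemma optimal_base_label_minimal:
  assumes "w \<in> A" "(w, y) \<in> E\<^sup>*"
  shows "f y \<le> f w"
proof -
  have "is_base (A, E) (insert w (X - {y}))"
  proof (rule is_base_if_reaches_base[OF base])
    show "insert w (X - {y}) \<subseteq> A"
      using base \<open>w \<in> A\<close> by (auto simp: is_base_def)
    show "\<forall>x\<in>X. \<exists>z\<in>insert w (X - {y}). (z, x) \<in> E\<^sup>*"
      using \<open>(w, y) \<in> E\<^sup>*\<close> by blast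
  qed
  then have "val_set f B X \<le> val_set f B (insert w (X - {y}))"
    by (rule optimal_base_le)
  also have "\<dots> \<le> val_set f B (X - {y}) + f w"
    using optimal_base_finite_remove by (rule val_set_insert_le)
  finally show ?thesis
    using optimal_base_remove by simp
qed

lemma optimal_base_not_reached:
  assumes "B \<subseteq> A" "0 < f y" "x \<in> X - {y} \<union> B"
  shows "(x, y) \<notin> E\<^sup>*"
proof
  assume "(x, y) \<in> E\<^sup>*"
  have "is_base (A, E) (X - {y} \<union> B)"
  proof (rule is_base_if_reaches_base[OF base])
    show "X - {y} \<union> B \<subseteq> A"
      using base \<open>B \<subseteq> A\<close> by (auto simp: is_base_def)
    show "\<forall>x'\<in>X. \<exists>z\<in>X - {y} \<union> B. (z, x') \<in> E\<^sup>*"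
      using \<open>(x, y) \<in> E\<^sup>*\<close> \<open>x \<in> X - {y} \<union> B\<close> by blast
  qed
  then have "val_set f B X \<le> val_set f B (X - {y})"
    using optimal_base_le[of "X - {y} \<union> B"] by (simp only: val_set_Un_base)
  then show False
    using optimal_base_remove \<open>0 < f y\<close> by simp
qed

lemma optimal_base_vertex_on_cycle:
  assumes "E \<subseteq> A \<times> A" "B \<subseteq> A" "0 < f y" "reachable_from_base_or_cycle E B y"
  shows "(y, y) \<in> E\<^sup>+"
proof -
  obtain c where c: "(c, c) \<in> E\<^sup>+" "(c, y) \<in> E\<^sup>*"
    using assms(4) optimal_base_not_reached[OF assms(2,3)]
    by (auto simp: reachable_from_base_or_cycle_def)
  then have "c \<in> A"
    using assms(1) by (auto dest: tranclD)
  then obtain x where "x \<in> X" "(x, c) \<in> E\<^sup>*"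
    using base by (auto simp: is_base_def)
  moreover from this have "x = y"
    using optimal_base_not_reached[OF assms(2,3), of x] c(2) by (auto intro: rtrancl_trans)
  ultimately have "(y, c) \<in> E\<^sup>*"
    by simp
  then show ?thesis
    using c by (blast intro: rtrancl_trancl_trancl trancl_rtrancl_trancl)
qed

lemma val_graph_exchange_less:
  assumes "edges_kept_up_to_swap y t E E'"
    and "w \<in> A" "(w, t) \<in> E" "f t = f y" "f w < f y"
    and "(t, z) \<in> E'" "(z, y) \<in> E\<^sup>*" "(t, y) \<notin> E\<^sup>*"
  shows "val_graph f B (A, E') < val_graph f B (A, E)"
proof -
  have "is_base (A, E') (insert w (X - {y}))"
    using assms base y by (intro is_base_exchange) auto
  then have "val_graph f B (A, E') \<le> val_set f B (insert w (X - {y}))"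
    using val_graph_le[of "(A, E')"] finite by simp
  also have "\<dots> \<le> val_set f B (X - {y}) + f w"
    using optimal_base_finite_remove by (rule val_set_insert_le)
  finally show ?thesis
    using optimal optimal_base_remove \<open>f w < f y\<close> by simp
qed

end

lemma exists_value_decreasing_exchange:
  assumes "finite A" "E \<subseteq> A \<times> A" "B \<subseteq> A"
    and rooted: "\<forall>u\<in>A. reachable_from_base_or_cycle E B u" and pos: "\<forall>u\<in>A. 0 < f u"
    and useful: "\<forall>u\<in>A - B. \<exists>v\<in>A. \<exists>w\<in>A. f u = f v \<and> f w < f v \<and> (w, v) \<in> E"
    and "0 < val_graph f B (A, E)"
  obtains y z t where "(y, z) \<in> E" "t \<in> A" "f t = f y"
    "\<And>E'. edges_kept_up_to_swap y t E E' \<Longrightarrow> (t, z) \<in> E' \<Longrightarrow>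
      val_graph f B (A, E') < val_graph f B (A, E)"
proof -
  obtain X where X: "is_base (A, E) X" "val_set f B X = val_graph f B (A, E)"
    using exists_optimal_base[of "(A, E)"] \<open>finite A\<close> by auto
  moreover have "X - B \<noteq> {}"
  proof
    assume "X - B = {}"
    then have "val_set f B X = 0"
      unfolding val_set_def by (simp only: sum.empty)
    then show False
      using X(2) \<open>0 < val_graph f B (A, E)\<close> by simp
  qed
  then obtain y where "y \<in> X" "y \<notin> B"
    by blast
  note optimal = \<open>finite A\<close> X this
  have "y \<in> A"
    using X \<open>y \<in> X\<close> by (auto simp: is_base_def)
  then have "(y, y) \<in> E\<^sup>+"
    using optimal_base_vertex_on_cycle[OF optimal assms(2,3)] pos rooted by simp
  then obtain z where z: "(y, z) \<in> E" "(z, y) \<in> E\<^sup>*"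
    by (blast dest: tranclD)
  obtain t w where t: "t \<in> A" "f t = f y" and w: "w \<in> A" "f w < f y" "(w, t) \<in> E"
    using useful \<open>y \<in> A\<close> \<open>y \<notin> B\<close> by force
  have "(t, y) \<notin> E\<^sup>*"
    using optimal_base_label_minimal[OF optimal w(1)] w by (auto intro: converse_rtrancl_into_rtrancl)
  then show thesis
    using that[OF z(1) t] val_graph_exchange_less[OF optimal _ w(1,3) t(2) w(2) _ z(2)] by blast
qed

section \<open>The graphs \<open>D_l\<close> of a swapped structure\<close>

lemma fst_Dgraph [simp]: "fst (Dgraph M RE l) = cint M (reachA RE l)"
  by (simp add: Dgraph_def)

lemma Dgraph_edge_iff:
  "(a, b) \<in> snd (Dgraph M RE l) \<longleftrightarrow>
     a \<in> cint M (reachA RE l) \<and> b \<in> cint M (reachA RE l) \<and> (\<exists>s\<in>reachS RE l. (a, b) \<in> rint M s)"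
  by (auto simp: Dgraph_def)

lemma val_eq_val_graph:
  "val g M RE l = val_graph g (cint M (reachB RE l)) (cint M (reachA RE l), snd (Dgraph M RE l))"
  by (simp add: val_def Dgraph_def)

lemma Dgraph_edges_subset: "snd (Dgraph M RE l) \<subseteq> cint M (reachA RE l) \<times> cint M (reachA RE l)"
  by (auto simp: Dgraph_def)

lemma finite_Dgraph_vertices:
  assumes "wf_struc NF M"
  shows "finite (cint M (reachA RE l))"
proof (rule finite_subset)
  show "cint M (reachA RE l) \<subseteq> univ M" "finite (univ M)"
    using assms unfolding wf_struc_def by blast+
qed

lemma Dgraph_swap_op_edge_iff:
  "(a, b) \<in> snd (Dgraph (swap_op M (a0, a1, r)) RE l) \<longleftrightarrow>
     a \<in> cint M (reachA RE l) \<and> b \<in> cint M (reachA RE l) \<and>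
     (\<exists>s\<in>reachS RE l. if s = r then (transpose a0 a1 a, b) \<in> rint M r else (a, b) \<in> rint M s)"
  by (simp only: Dgraph_edge_iff rint_swap_op_iff swap_op_simps)

lemma Dgraph_swap_op_unchanged:
  assumes "r \<notin> reachS RE l \<or> a0 \<notin> cint M (reachA RE l) \<and> a1 \<notin> cint M (reachA RE l)"
  shows "Dgraph (swap_op M (a0, a1, r)) RE l = Dgraph M RE l"
proof -
  have "(a, b) \<in> snd (Dgraph (swap_op M (a0, a1, r)) RE l) \<longleftrightarrow> (a, b) \<in> snd (Dgraph M RE l)"
    for a b
  proof (cases "a \<in> cint M (reachA RE l)")
    case True
    with assms have "r \<notin> reachS RE l \<or> transpose a0 a1 a = a"
      by (metis transpose_apply_other)
    then show ?thesis
      unfolding Dgraph_swap_op_edge_iff unfolding Dgraph_edge_iff by auto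
  qed (simp add: Dgraph_swap_op_edge_iff Dgraph_edge_iff)
  then show ?thesis
    by (simp add: prod_eq_iff set_eq_iff)
qed

lemma edges_kept_Dgraph_swap_op:
  assumes "a0 \<in> cint M (reachA RE l) \<longleftrightarrow> a1 \<in> cint M (reachA RE l)"
  shows "edges_kept_up_to_swap a0 a1 (snd (Dgraph M RE l)) (snd (Dgraph (swap_op M (a0, a1, r)) RE l))"
proof (rule edges_kept_up_to_swapI)
  fix a b
  assume "(a, b) \<in> snd (Dgraph M RE l)"
  then obtain s where "s \<in> reachS RE l" "(a, b) \<in> rint M s"
    and A: "a \<in> cint M (reachA RE l)" "b \<in> cint M (reachA RE l)"
    by (auto simp: Dgraph_edge_iff)
  moreover have "transpose a0 a1 a \<in> cint M (reachA RE l)"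
    using A assms by simp
  ultimately show "(a, b) \<in> snd (Dgraph (swap_op M (a0, a1, r)) RE l) \<or>
      (transpose a0 a1 a, b) \<in> snd (Dgraph (swap_op M (a0, a1, r)) RE l)"
    unfolding Dgraph_swap_op_edge_iff by (cases "s = r") auto
qed

lemma Dgraph_swap_op_moved_edge:
  assumes "(a0, b) \<in> rint M r" "r \<in> reachS RE l" "a1 \<in> cint M (reachA RE l)" "b \<in> cint M (reachA RE l)"
  shows "(a1, b) \<in> snd (Dgraph (swap_op M (a0, a1, r)) RE l)"
  using assms by (auto simp: Dgraph_swap_op_edge_iff)

lemma semi_connected_iff:
  "semi_connected M \<phi> RE DI \<longleftrightarrow> sat_assoc M \<phi> RE DI \<and>
     (\<forall>l\<in>{1..length RE}. \<forall>u\<in>cint M (reachA RE l).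
        reachable_from_base_or_cycle (snd (Dgraph M RE l)) (cint M (reachB RE l)) u)"
  by (simp add: semi_connected_def reachable_from_base_or_cycle_def)

lemma semi_connected_swap_op:
  assumes "wf_struc NF M" "semi_connected M \<phi> RE DI"
    and "sat_assoc (swap_op M (a0, a1, r)) \<phi> RE DI"
    and kept: "\<forall>l\<in>{1..length RE}. edges_kept_up_to_swap a0 a1
           (snd (Dgraph M RE l)) (snd (Dgraph (swap_op M (a0, a1, r)) RE l))"
  shows "semi_connected (swap_op M (a0, a1, r)) \<phi> RE DI"
  unfolding semi_connected_iff swap_op_simps
proof (intro conjI ballI)
  fix l u
  assume l: "l \<in> {1..length RE}" and u: "u \<in> cint M (reachA RE l)"
  have "\<forall>v\<in>cint M (reachA RE l).
      reachable_from_base_or_cycle (snd (Dgraph M RE l)) (cint M (reachB RE l)) v"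
    using assms(2) l by (simp add: semi_connected_iff)
  with kept l show "reachable_from_base_or_cycle (snd (Dgraph (swap_op M (a0, a1, r)) RE l))
      (cint M (reachB RE l)) u"
    using reachable_from_base_or_cycle_kept_up_to_swap[OF finite_Dgraph_vertices[OF assms(1)]
        Dgraph_edges_subset[of "swap_op M (a0, a1, r)", unfolded swap_op_simps] _ _ u]
    by blast
qed (fact assms(3))

lemma useful_labeling_swap_op:
  assumes "useful_labeling \<phi> RE l M g" "tp \<phi> (swap_op M (a0, a1, r)) = tp \<phi> M"
    and kept: "edges_kept_up_to_swap a0 a1
      (snd (Dgraph M RE l)) (snd (Dgraph (swap_op M (a0, a1, r)) RE l))"
    and "g a0 = g a1"
  shows "useful_labeling \<phi> RE l (swap_op M (a0, a1, r)) g"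
proof -
  let ?A = "cint M (reachA RE l)" and ?E' = "snd (Dgraph (swap_op M (a0, a1, r)) RE l)"
  have "\<exists>w'\<in>?A. g w' = g w \<and> (w', v) \<in> ?E'" if "(w, v) \<in> snd (Dgraph M RE l)" for v w
  proof -
    have "(w, v) \<in> ?E' \<or> (transpose a0 a1 w, v) \<in> ?E'"
      using kept that unfolding edges_kept_up_to_swap_def by blast
    moreover have "g (transpose a0 a1 w) = g w"
      using \<open>g a0 = g a1\<close> by (simp add: transpose_def)
    ultimately show ?thesis
      using Dgraph_edges_subset[of "swap_op M (a0, a1, r)" RE l] by auto
  qed
  with assms(1) show ?thesis
    unfolding useful_labeling_def swap_op_simps assms(2) by (metis (no_types, lifting))
qed

lemma useful_labeling_swap_op_unchanged:
  assumes "useful_labeling \<phi> RE l M g" "tp \<phi> (swap_op M (a0, a1, r)) = tp \<phi> M"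
    and "Dgraph (swap_op M (a0, a1, r)) RE l = Dgraph M RE l"
  shows "useful_labeling \<phi> RE l (swap_op M (a0, a1, r)) g"
  using assms(1) unfolding useful_labeling_def swap_op_simps assms(2,3) .

lemma exists_value_decreasing_swap_op:
  assumes "wf_struc NF M" "cint M (reachB RE l) \<subseteq> cint M (reachA RE l)"
    and "\<forall>u\<in>cint M (reachA RE l).
      reachable_from_base_or_cycle (snd (Dgraph M RE l)) (cint M (reachB RE l)) u"
    and useful: "useful_labeling \<phi> RE l M g" and "0 < val g M RE l"
  obtains a0 a1 r where "a0 \<in> cint M (reachA RE l)" "a1 \<in> cint M (reachA RE l)"
    "r \<in> reachS RE l" "g a0 = g a1" "tp \<phi> M a0 = tp \<phi> M a1"
    "val g (swap_op M (a0, a1, r)) RE l < val g M RE l"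
proof -
  let ?A = "cint M (reachA RE l)" and ?B = "cint M (reachB RE l)"
  obtain y z t where yz: "(y, z) \<in> snd (Dgraph M RE l)" and t: "t \<in> ?A" "g t = g y"
    and decrease: "\<And>E'. edges_kept_up_to_swap y t (snd (Dgraph M RE l)) E' \<Longrightarrow> (t, z) \<in> E' \<Longrightarrow>
      val_graph g ?B (?A, E') < val_graph g ?B (?A, snd (Dgraph M RE l))"
  proof (rule exists_value_decreasing_exchange[OF finite_Dgraph_vertices[OF assms(1)]
        Dgraph_edges_subset assms(2,3)])
    show "\<forall>u\<in>?A. 0 < g u" "\<forall>u\<in>?A - ?B. \<exists>v\<in>?A. \<exists>w\<in>?A. g u = g v \<and> g w < g v \<and>
        (w, v) \<in> snd (Dgraph M RE l)"
      using useful unfolding useful_labeling_def by (auto simp: Suc_le_eq)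
    show "0 < val_graph g ?B (?A, snd (Dgraph M RE l))"
      using \<open>0 < val g M RE l\<close> by (simp only: val_eq_val_graph)
  qed blast
  then obtain r where r: "(y, z) \<in> rint M r" "r \<in> reachS RE l" and "y \<in> ?A" "z \<in> ?A"
    by (auto simp: Dgraph_def)
  have "val g (swap_op M (y, t, r)) RE l < val g M RE l"
    using decrease[OF edges_kept_Dgraph_swap_op Dgraph_swap_op_moved_edge[OF r]]
      \<open>y \<in> ?A\<close> \<open>z \<in> ?A\<close> t by (simp add: val_eq_val_graph)
  moreover have "tp \<phi> M y = tp \<phi> M t"
    using useful \<open>y \<in> ?A\<close> t unfolding useful_labeling_def by metis
  ultimately show thesis
    using that \<open>y \<in> ?A\<close> t r by simp
qed

context
  fixes NF :: "'r set" and RE :: "('c, 'r) reach list" and DI :: "('c \<times> 'c) set"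
    and M :: "('a, 'c, 'r, 'o) struc" and \<phi> :: "('c, 'r, 'o) formula"
    and h :: nat and a0 a1 :: 'a and r :: 'r
  assumes alcqio: "is_ALCQIO_bRe NF RE DI" and assoc: "sat_assoc M \<phi> RE DI"
    and h: "h \<in> {1..length RE}"
    and swapped: "a0 \<in> cint M (reachA RE h)" "a1 \<in> cint M (reachA RE h)" "r \<in> reachS RE h"
begin

lemma Dgraph_swap_op_other_assertion:
  assumes "l \<in> {1..length RE}" "l \<noteq> h"
  shows "Dgraph (swap_op M (a0, a1, r)) RE l = Dgraph M RE l"
proof (rule Dgraph_swap_op_unchanged)
  have "r \<in> reachS RE l \<Longrightarrow> cint M (reachA RE h) \<inter> cint M (reachA RE l) = {}"
    using alcqio assoc h assms swapped(3)
    unfolding is_ALCQIO_bRe_def compatible_def sat_assoc_def by blast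
  then show "r \<notin> reachS RE l \<or> a0 \<notin> cint M (reachA RE l) \<and> a1 \<notin> cint M (reachA RE l)"
    using swapped(1,2) by blast
qed

lemma edges_kept_Dgraph_swap_op_assertion:
  assumes "l \<in> {1..length RE}"
  shows "edges_kept_up_to_swap a0 a1 (snd (Dgraph M RE l)) (snd (Dgraph (swap_op M (a0, a1, r)) RE l))"
proof (cases "l = h")
  case True
  then show ?thesis
    using swapped(1,2) by (simp add: edges_kept_Dgraph_swap_op)
next
  case False
  then show ?thesis
    using Dgraph_swap_op_other_assertion[OF assms] by (simp add: edges_kept_up_to_swap_refl)
qed

lemma useful_labeling_swap_op_assertion:
  assumes "l \<in> {1..length RE}" "useful_labeling \<phi> RE l M g"
    and "tp \<phi> (swap_op M (a0, a1, r)) = tp \<phi> M" "l = h \<Longrightarrow> g a0 = g a1"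
  shows "useful_labeling \<phi> RE l (swap_op M (a0, a1, r)) g"
proof (cases "l = h")
  case True
  then show ?thesis
    using useful_labeling_swap_op[OF assms(2,3) edges_kept_Dgraph_swap_op_assertion] assms(1,4)
    by blast
next
  case False
  then show ?thesis
    using useful_labeling_swap_op_unchanged[OF assms(2,3) Dgraph_swap_op_other_assertion] assms(1)
    by blast
qed

end

theorem lemma7:
  fixes NF :: "'r set"
    and \<phi> :: "('c, 'r, 'o) formula"
    and RE :: "('c, 'r) reach list"
    and DI :: "('c \<times> 'c) set"
    and M :: "('a, 'c, 'r, 'o) struc"
    and f :: "nat \<Rightarrow> 'a \<Rightarrow> nat"
    and h' :: nat
  assumes "is_ALCQIO_bRe NF RE DI"
    and "wf_struc NF M"
    and "1 \<le> h'" and "h' \<le> length RE"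
    and "sat_assoc M \<phi> RE DI"
    and "semi_connected M \<phi> RE DI"
    and "\<forall>l\<in>{1..length RE}. useful_labeling \<phi> RE l M (f l)"
    and "val (f h') M RE h' > 0"
  shows "\<exists>a0 a1 r. a0 \<in> univ M \<and> a1 \<in> univ M \<and> r \<in> NF \<and>
    (let M' = swap_op M (a0, a1, r) in
      (\<forall>l\<in>{1..length RE}. l \<noteq> h' \<longrightarrow> Dgraph M RE l = Dgraph M' RE l) \<and>
      (\<forall>u\<in>univ M. tp \<phi> M u = tp \<phi> M' u) \<and>
      sat_assoc M' \<phi> RE DI \<and>
      val (f h') M RE h' > val (f h') M' RE h' \<and>
      (\<forall>l\<in>{1..length RE}. l \<noteq> h' \<longrightarrow> val (f l) M RE l = val (f l) M' RE l) \<and>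
      semi_connected M' \<phi> RE DI \<and>
      (\<forall>l\<in>{1..length RE}. useful_labeling \<phi> RE l M' (f l)))"
proof -
  have h': "h' \<in> {1..length RE}"
    using assms(3,4) by simp
  have "cint M (reachB RE h') \<subseteq> cint M (reachA RE h')"
    using assms(5) h' by (simp add: sat_assoc_def)
  moreover have "\<forall>u\<in>cint M (reachA RE h').
      reachable_from_base_or_cycle (snd (Dgraph M RE h')) (cint M (reachB RE h')) u"
    using assms(6) h' by (simp add: semi_connected_iff)
  ultimately obtain y t r where swapped: "y \<in> cint M (reachA RE h')" "t \<in> cint M (reachA RE h')"
      "r \<in> reachS RE h'" and label: "f h' y = f h' t" and tp_eq: "tp \<phi> M y = tp \<phi> M t"
    and decrease: "val (f h') (swap_op M (y, t, r)) RE h' < val (f h') M RE h'"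
    using exists_value_decreasing_swap_op[OF assms(2) _ _ bspec[OF assms(7) h'] assms(8)] by blast
  define M' where "M' = swap_op M (y, t, r)"
  have univ: "y \<in> univ M" "t \<in> univ M"
    using swapped(1,2) assms(2) unfolding wf_struc_def by blast+
  have tp: "tp \<phi> M' = tp \<phi> M" and sat: "sat_assoc M' \<phi> RE DI"
    unfolding M'_def using tp_swap_op[OF univ tp_eq] sat_assoc_swap_op[OF univ tp_eq] assms(5)
    by auto
  note swap = assms(1,5) h' swapped
  have "\<forall>l\<in>{1..length RE}. useful_labeling \<phi> RE l M' (f l)"
    using useful_labeling_swap_op_assertion[OF swap] assms(7) tp label unfolding M'_def by simp
  moreover have "semi_connected M' \<phi> RE DI"
    using semi_connected_swap_op[OF assms(2,6)] sat edges_kept_Dgraph_swap_op_assertion[OF swap]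
    unfolding M'_def by simp
  moreover have "r \<in> NF" "cint M' = cint M"
    using assms(1) h' swapped(3) unfolding is_ALCQIO_bRe_def M'_def by auto
  ultimately show ?thesis
    unfolding Let_def using univ tp sat decrease Dgraph_swap_op_other_assertion[OF swap]
    by - (rule exI[of _ y], rule exI[of _ t], rule exI[of _ r],
      auto simp: M'_def[symmetric] val_def)
qed

end
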